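(* Every nice bipartite graph $G$ satisfies $\chi'_{qm\Sigma}(G)\le 6$.
   Context: All graphs are simple and finite. A $k$-edge-coloring of $G$ is any map $c:E(G)\to\{1,\dots,k\}$ (adjacent edges may share colors). It induces $\sigma_c(v)=\sum_{u\in N(v)}c(vu)$. The coloring is neighbor sum distinguishing (NSD) if $\sigma_c(u)\ne\sigma_c(v)$ for every edge $uv$. It is quasi-majority if every vertex $v$ is incident to at most $\lceil d(v)/2\rceil$ edges of each single color. $\chi'_{qm\Sigma}(G)$ denotes the least $k$ such that $G$ has a $k$-edge-coloring that is both quasi-majority and NSD. A graph is nice if it has no connected component isomorphic to $K_2$. *)

theory Defs
  imports Main
begin

definition simple_graph :: "'a set \<Rightarrow> 'a set set \<Rightarrow> bool" where
  "simple_graph V E \<longleftrightarrow> finite V \<and> (\<forall>e\<in>E. e \<subseteq> V \<and> card e = 2)"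

definition nbrs :: "'a set set \<Rightarrow> 'a \<Rightarrow> 'a set" where
  "nbrs E v = {u. {u, v} \<in> E}"

definition degree :: "'a set set \<Rightarrow> 'a \<Rightarrow> nat" where
  "degree E v = card (nbrs E v)"

definition bipartite :: "'a set \<Rightarrow> 'a set set \<Rightarrow> bool" where
  "bipartite V E \<longleftrightarrow> (\<exists>A \<subseteq> V. \<forall>e\<in>E. card (e \<inter> A) = 1)"

(* nice: no connected component isomorphic to K2, i.e. no edge both of whose ends have degree 1 *)
definition nice :: "'a set set \<Rightarrow> bool" where
  "nice E \<longleftrightarrow> (\<forall>u v. {u, v} \<in> E \<longrightarrow> \<not> (degree E u = 1 \<and> degree E v = 1))"

definition edge_coloring :: "nat \<Rightarrow> 'a set set \<Rightarrow> ('a set \<Rightarrow> nat) \<Rightarrow> bool" where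
  "edge_coloring k E c \<longleftrightarrow> (\<forall>e\<in>E. c e \<in> {1..k})"

definition sigma :: "'a set set \<Rightarrow> ('a set \<Rightarrow> nat) \<Rightarrow> 'a \<Rightarrow> nat" where
  "sigma E c v = (\<Sum>u\<in>nbrs E v. c {v, u})"

definition nsd :: "'a set set \<Rightarrow> ('a set \<Rightarrow> nat) \<Rightarrow> bool" where
  "nsd E c \<longleftrightarrow> (\<forall>u v. {u, v} \<in> E \<longrightarrow> sigma E c u \<noteq> sigma E c v)"

definition quasi_majority :: "'a set \<Rightarrow> 'a set set \<Rightarrow> ('a set \<Rightarrow> nat) \<Rightarrow> bool" where
  "quasi_majority V E c \<longleftrightarrow>
     (\<forall>v\<in>V. \<forall>i. 2 * card {u \<in> nbrs E v. c {v, u} = i} \<le> degree E v + 1)"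

(* chi'_{qm Sigma}(G) \<le> k : some k-edge-coloring is both quasi-majority and NSD *)
definition qm_nsd_colorable :: "nat \<Rightarrow> 'a set \<Rightarrow> 'a set set \<Rightarrow> bool" where
  "qm_nsd_colorable k V E \<longleftrightarrow>
     (\<exists>c. edge_coloring k E c \<and> quasi_majority V E c \<and> nsd E c)"

end

theory Submission
  imports Defs "HOL-Number_Theory.Cong"
begin

(* Write a colour as c = r + 3 h with r in {1, 2, 3} and h boolean. If h is balanced at every
   vertex (each value on at most half of the incident edges, rounded up), then c is
   quasi-majority whatever r is; a bipartite graph has such an h, obtained by peeling off
   pendant edges and alternately coloured even cycles. The residues r are chosen so that the
   vertex sums are 0 mod 3 off a chosen colour class of each component and 1 or 2 mod 3 on it,
   which separates adjacent vertices. By the Fredholm alternative over Z/3 such r exists as soon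
   as the prescribed sums vanish mod 3 over the chosen class of every component, and this can
   be arranged because niceness provides a class with at least two vertices. *)

lemma nbrs_sym: "u \<in> nbrs E v \<longleftrightarrow> v \<in> nbrs E u"
  by (simp add: nbrs_def insert_commute)

lemma finite_nbrs:
  assumes "simple_graph V E" shows "finite (nbrs E v)"
proof (rule finite_subset)
  show "nbrs E v \<subseteq> V" using assms by (auto simp: simple_graph_def nbrs_def)
  show "finite V" using assms by (simp add: simple_graph_def)
qed

definition cancels_on_edges :: "int \<Rightarrow> 'a set set \<Rightarrow> ('a \<Rightarrow> int) \<Rightarrow> bool" where
  "cancels_on_edges p E f \<longleftrightarrow> (\<forall>u v. {u, v} \<in> E \<longrightarrow> [f u + f v = 0] (mod p))"

lemma cancels_on_edges_insert:
  "cancels_on_edges p (insert {u, v} F) f \<longleftrightarrow> cancels_on_edges p F f \<and> [f u + f v = 0] (mod p)"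
  by (auto simp: cancels_on_edges_def doubleton_eq_iff add.commute)

lemma cancels_on_edges_diff_scaled:
  assumes "cancels_on_edges p E f" "cancels_on_edges p E g"
  shows "cancels_on_edges p E (\<lambda>w. f w - c * g w)"
  unfolding cancels_on_edges_def
proof (intro allI impI)
  fix u v assume "{u, v} \<in> E"
  then have "[f u + f v - c * (g u + g v) = 0 - c * 0] (mod p)"
    using assms by (intro cong_diff cong_scalar_left) (auto simp: cancels_on_edges_def)
  then show "[f u - c * g u + (f v - c * g v) = 0] (mod p)" by (simp add: algebra_simps)
qed

lemma sum_mult_shift_at_two_points:
  fixes f t :: "'a \<Rightarrow> int"
  assumes "finite U" "u \<in> U" "v \<in> U" "u \<noteq> v"
  shows "(\<Sum>w\<in>U. f w * (t w - (if w = u then x else 0) - (if w = v then x else 0)))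
       = (\<Sum>w\<in>U. f w * t w) - x * (f u + f v)"
proof -
  have "(\<Sum>w\<in>U. f w * (t w - (if w = u then x else 0) - (if w = v then x else 0)))
      = (\<Sum>w\<in>U. f w * t w - (if w = u then f w * x else 0) - (if w = v then f w * x else 0))"
    by (rule sum.cong) (auto simp: algebra_simps)
  also have "\<dots> = (\<Sum>w\<in>U. f w * t w) - f u * x - f v * x"
    using assms by (simp add: sum_subtractf sum.delta)
  finally show ?thesis by (simp add: algebra_simps)
qed

lemma orthogonal_after_removing_edge:
  fixes t :: "'a \<Rightarrow> int"
  assumes p: "prime p" and U: "finite U" "u \<in> U" "v \<in> U" "u \<noteq> v"
    and orth: "\<And>f. cancels_on_edges p (insert {u, v} F) f \<Longrightarrow> [(\<Sum>w\<in>U. f w * t w) = 0] (mod p)"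
  obtains x where "\<And>f. cancels_on_edges p F f \<Longrightarrow>
    [(\<Sum>w\<in>U. f w * (t w - (if w = u then x else 0) - (if w = v then x else 0))) = 0] (mod p)"
proof (cases "\<forall>f. cancels_on_edges p F f \<longrightarrow> [f u + f v = 0] (mod p)")
  case True
  show ?thesis
    by (rule that[of 0]) (use True orth in \<open>simp add: cancels_on_edges_insert\<close>)
next
  case False
  then obtain f0 where f0: "cancels_on_edges p F f0" and s0: "\<not> [f0 u + f0 v = 0] (mod p)"
    by blast
  have "coprime (f0 u + f0 v) p"
    using p s0 by (simp add: cong_0_iff prime_imp_coprime coprime_commute)
  then obtain s' where inv: "[(f0 u + f0 v) * s' = 1] (mod p)"
    by (auto simp: coprime_iff_invertible_int)
  define x where "x = s' * (\<Sum>w\<in>U. f0 w * t w)"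
  show ?thesis
  proof (rule that[of x])
    fix f assume f: "cancels_on_edges p F f"
    define l where "l = (f u + f v) * s'"
    \<comment> \<open>subtracting \<open>l f0\<close> kills the defect of \<open>f\<close> on the new edge\<close>
    have "(f u - l * f0 u) + (f v - l * f0 v) = (f u + f v) - (f u + f v) * ((f0 u + f0 v) * s')"
      by (simp add: l_def algebra_simps)
    also have "[\<dots> = (f u + f v) - (f u + f v) * 1] (mod p)"
      by (intro cong_diff cong_refl cong_scalar_left inv)
    finally have "[(f u - l * f0 u) + (f v - l * f0 v) = 0] (mod p)"
      by simp
    then have "cancels_on_edges p (insert {u, v} F) (\<lambda>w. f w - l * f0 w)"
      using cancels_on_edges_diff_scaled[OF f f0] by (simp add: cancels_on_edges_insert)
    then have "[(\<Sum>w\<in>U. (f w - l * f0 w) * t w) = 0] (mod p)"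
      by (rule orth)
    moreover have "(\<Sum>w\<in>U. (f w - l * f0 w) * t w)
        = (\<Sum>w\<in>U. f w * (t w - (if w = u then x else 0) - (if w = v then x else 0)))"
      unfolding sum_mult_shift_at_two_points[OF U]
      by (simp add: x_def l_def algebra_simps sum_subtractf sum_distrib_left)
    ultimately show "[(\<Sum>w\<in>U. f w * (t w - (if w = u then x else 0) - (if w = v then x else 0))) = 0] (mod p)"
      by simp
  qed
qed

lemma sum_nbrs_insert_edge:
  fixes \<rho> :: "'a set \<Rightarrow> int"
  assumes "{u, v} \<notin> F" "u \<noteq> v" "finite (nbrs F w)"
  shows "(\<Sum>y\<in>nbrs (insert {u, v} F) w. (\<rho>({u, v} := x)) {w, y})
       = (\<Sum>y\<in>nbrs F w. \<rho> {w, y}) + (if w = u then x else 0) + (if w = v then x else 0)"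
proof -
  have old: "(\<Sum>y\<in>nbrs F w. (\<rho>({u, v} := x)) {w, y}) = (\<Sum>y\<in>nbrs F w. \<rho> {w, y})"
    using assms(1) by (intro sum.cong) (auto simp: nbrs_def insert_commute)
  consider "w = u" | "w = v" | "w \<noteq> u" "w \<noteq> v" by blast
  then show ?thesis
  proof cases
    case 1
    then have "nbrs (insert {u, v} F) w = insert v (nbrs F w)" "v \<notin> nbrs F w"
      using assms(1,2) by (auto simp: nbrs_def doubleton_eq_iff insert_commute)
    then show ?thesis using 1 old assms(2,3) by simp
  next
    case 2
    then have "nbrs (insert {u, v} F) w = insert u (nbrs F w)" "u \<notin> nbrs F w"
      using assms(1,2) by (auto simp: nbrs_def doubleton_eq_iff)
    then show ?thesis using 2 old assms(2,3) by (simp add: insert_commute)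
  next
    case 3
    then have "nbrs (insert {u, v} F) w = nbrs F w"
      by (auto simp: nbrs_def doubleton_eq_iff)
    then show ?thesis using 3 old by simp
  qed
qed

lemma nbr_sums_solvable_mod_prime:
  fixes t :: "'a \<Rightarrow> int"
  assumes p: "prime p" and E: "finite E" "\<forall>e\<in>E. card e = 2" and U: "finite U" "\<Union>E \<subseteq> U"
    and orth: "\<And>f. cancels_on_edges p E f \<Longrightarrow> [(\<Sum>w\<in>U. f w * t w) = 0] (mod p)"
  shows "\<exists>\<rho>. \<forall>w\<in>U. [(\<Sum>u\<in>nbrs E w. \<rho> {w, u}) = t w] (mod p)"
  using E U(2) orth
proof (induction E arbitrary: t rule: finite_induct)
  case empty
  have "[t w = 0] (mod p)" if "w \<in> U" for w
  proof -
    have "cancels_on_edges p {} (\<lambda>x. of_bool (x = w))"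
      by (simp add: cancels_on_edges_def)
    then have "[(\<Sum>x\<in>U. of_bool (x = w) * t x) = 0] (mod p)"
      by (rule empty.prems(3))
    moreover have "(\<Sum>x\<in>U. of_bool (x = w) * t x) = (\<Sum>x\<in>U. if x = w then t x else 0)"
      by (rule sum.cong) auto
    ultimately show ?thesis using that U(1) by simp
  qed
  then show ?case by (auto simp: nbrs_def cong_sym)
next
  case (insert e F)
  obtain u v where e: "e = {u, v}" "u \<noteq> v"
    using insert.prems(1) by (meson card_2_iff insertI1)
  have uv: "u \<in> U" "v \<in> U" using insert.prems(2) e by auto
  obtain x where x: "\<And>f. cancels_on_edges p F f \<Longrightarrow>
      [(\<Sum>w\<in>U. f w * (t w - (if w = u then x else 0) - (if w = v then x else 0))) = 0] (mod p)"
    using orthogonal_after_removing_edge[OF p U(1) uv e(2)] insert.prems(3) e by blast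
  obtain \<rho> where \<rho>: "\<forall>w\<in>U. [(\<Sum>y\<in>nbrs F w. \<rho> {w, y})
      = t w - (if w = u then x else 0) - (if w = v then x else 0)] (mod p)"
    using insert.IH[OF _ _ x] insert.prems(1,2) by blast
  have fin: "finite (nbrs F w)" for w
  proof (rule finite_subset)
    show "nbrs F w \<subseteq> \<Union>F" by (auto simp: nbrs_def)
    show "finite (\<Union>F)"
      using insert.hyps(1) insert.prems(1) by (intro finite_Union) (auto intro: card_ge_0_finite)
  qed
  have "[(\<Sum>y\<in>nbrs (insert e F) w. (\<rho>(e := x)) {w, y}) = t w] (mod p)" if "w \<in> U" for w
    using \<rho> that insert.hyps(2) sum_nbrs_insert_edge[OF _ e(2) fin, of \<rho> x] e
    by (auto simp: cong_iff_dvd_diff algebra_simps)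
  then show ?case by blast
qed

definition cycle_edges :: "(nat \<Rightarrow> 'a) \<Rightarrow> nat \<Rightarrow> 'a set set" where
  "cycle_edges c m = (\<lambda>i. {c i, c (Suc i mod m)}) ` {..<m}"

lemma cycle_edge_index_unique:
  assumes inj: "inj_on c {..<m}" and "3 \<le> m" "i < m" "k < m"
    and eq: "{c k, c (Suc k mod m)} = {c i, c (Suc i mod m)}"
  shows "i = k"
proof -
  have "Suc i mod m < m" "Suc k mod m < m" using assms(3,4) by auto
  from eq consider "c k = c i" | "c k = c (Suc i mod m)" "c (Suc k mod m) = c i"
    by (auto simp: doubleton_eq_iff)
  then show ?thesis
  proof cases
    case 1
    then show ?thesis using inj assms(3,4) by (auto dest: inj_onD)
  next
    case 2
    then have "k = Suc i mod m" "Suc k mod m = i"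
      using inj assms(3,4) \<open>Suc i mod m < m\<close> \<open>Suc k mod m < m\<close> by (auto dest: inj_onD)
    then show ?thesis using assms(2-4) by (auto simp: mod_Suc split: if_splits)
  qed
qed

lemma nbrs_cycle_edges_outside:
  "w \<notin> c ` {..<m} \<Longrightarrow> nbrs (cycle_edges c m) w = {}"
  by (auto simp: nbrs_def cycle_edges_def doubleton_eq_iff)

lemma nbrs_cycle_edges:
  assumes inj: "inj_on c {..<m}" and "3 \<le> m" "k < m"
  shows "nbrs (cycle_edges c m) (c k) = {c (Suc k mod m), c ((k + m - 1) mod m)}"
proof -
  have pred: "Suc ((k + m - 1) mod m) mod m = k"
    using assms(2,3) by (cases k) (auto simp: mod_Suc)
  have "u \<in> {c (Suc k mod m), c ((k + m - 1) mod m)}"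
    if "i < m" "{u, c k} = {c i, c (Suc i mod m)}" for u i
  proof -
    from that(2) consider "u = c i" "c k = c (Suc i mod m)" | "u = c (Suc i mod m)" "c k = c i"
      by (auto simp: doubleton_eq_iff)
    then show ?thesis
    proof cases
      case 1
      then have "k = Suc i mod m" using inj assms(3) that(1) by (auto dest: inj_onD)
      then have "i = (k + m - 1) mod m" using that(1) assms(2) by (auto simp: mod_Suc split: if_splits)
      then show ?thesis using 1 by simp
    next
      case 2
      then show ?thesis using inj assms(3) that(1) by (auto dest: inj_onD)
    qed
  qed
  moreover have "{c k, c (Suc k mod m)} \<in> cycle_edges c m"
    using assms(3) by (auto simp: cycle_edges_def)
  moreover have "{c ((k + m - 1) mod m), c k} \<in> cycle_edges c m"
    unfolding cycle_edges_def using pred assms(2)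
    by (intro image_eqI[of _ _ "(k + m - 1) mod m"]) (auto simp: insert_commute)
  ultimately show ?thesis
    by (auto simp: nbrs_def cycle_edges_def insert_commute)
qed

definition balanced :: "'a set set \<Rightarrow> ('a set \<Rightarrow> bool) \<Rightarrow> bool" where
  "balanced E h \<longleftrightarrow> (\<forall>v b. 2 * card {u \<in> nbrs E v. h {v, u} = b} \<le> degree E v + 1)"

definition perfectly_balanced :: "'a set set \<Rightarrow> ('a set \<Rightarrow> bool) \<Rightarrow> bool" where
  "perfectly_balanced E h \<longleftrightarrow> (\<forall>v b. 2 * card {u \<in> nbrs E v. h {v, u} = b} = degree E v)"

definition alternating :: "(nat \<Rightarrow> 'a) \<Rightarrow> nat \<Rightarrow> 'a set \<Rightarrow> bool" where
  "alternating c m e \<longleftrightarrow> (\<exists>i<m. even i \<and> e = {c i, c (Suc i mod m)})"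

lemma alternating_cycle_perfectly_balanced:
  assumes inj: "inj_on c {..<m}" and "even m" "4 \<le> m"
  shows "perfectly_balanced (cycle_edges c m) (alternating c m)"
  unfolding perfectly_balanced_def
proof (intro allI)
  fix v b
  let ?h = "alternating c m"
  have colour: "?h {c k, c (Suc k mod m)} \<longleftrightarrow> even k" if "k < m" for k
    using cycle_edge_index_unique[OF inj _ _ that] assms(3) that by (auto simp: alternating_def)
  show "2 * card {u \<in> nbrs (cycle_edges c m) v. ?h {v, u} = b} = degree (cycle_edges c m) v"
  proof (cases "v \<in> c ` {..<m}")
    case False
    then show ?thesis by (simp add: nbrs_cycle_edges_outside degree_def)
  next
    case True
    then obtain k where k: "k < m" "v = c k" by auto
    define x y where "x = c (Suc k mod m)" and "y = c ((k + m - 1) mod m)"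
    have "(k + m - 1) mod m < m" "Suc k mod m < m" using k(1) by auto
    moreover have "(k + m - 1) mod m \<noteq> Suc k mod m"
      using k(1) assms(2,3) by (cases k) (auto simp: mod_Suc split: if_splits)
    ultimately have "x \<noteq> y" using inj by (auto simp: x_def y_def dest: inj_onD)
    have "?h {v, x} \<longleftrightarrow> even k" using colour k by (simp add: x_def)
    moreover have "?h {v, y} \<longleftrightarrow> odd k"
    proof -
      have "Suc ((k + m - 1) mod m) mod m = k"
        using assms(3) k(1) by (cases k) (auto simp: mod_Suc)
      then have "?h {v, y} \<longleftrightarrow> even ((k + m - 1) mod m)"
        using colour[of "(k + m - 1) mod m"] k by (simp add: y_def insert_commute)
      also have "\<dots> \<longleftrightarrow> odd k"
        using k(1) assms(2,3) by (cases k) auto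
      finally show ?thesis .
    qed
    ultimately have "{u \<in> {x, y}. ?h {v, u} = b} = (if b = even k then {x} else {y})"
      by auto
    moreover have "nbrs (cycle_edges c m) v = {x, y}"
      using nbrs_cycle_edges[OF inj _ k(1)] assms(3) k(2) by (simp add: x_def y_def)
    ultimately show ?thesis using \<open>x \<noteq> y\<close> by (simp add: degree_def)
  qed
qed

lemma card_filter_add_card_filter_not:
  "finite N \<Longrightarrow> card {u \<in> N. P u} + card {u \<in> N. \<not> P u} = card N"
  by (subst card_Un_disjoint[symmetric]) (auto intro: arg_cong[where f = card])

lemma balanced_Un_perfectly_balanced:
  assumes fin: "\<And>v. finite (nbrs E v)" "\<And>v. finite (nbrs F v)" and "E \<inter> F = {}"
    and "balanced E h" "perfectly_balanced F g"
  shows "balanced (E \<union> F) (\<lambda>e. if e \<in> F then g e else h e)"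
  unfolding balanced_def
proof (intro allI)
  fix v b
  let ?h = "\<lambda>e. if e \<in> F then g e else h e"
  have split: "nbrs (E \<union> F) v = nbrs E v \<union> nbrs F v" "nbrs E v \<inter> nbrs F v = {}"
    using assms(3) by (auto simp: nbrs_def)
  have "{u \<in> nbrs (E \<union> F) v. ?h {v, u} = b}
      = {u \<in> nbrs E v. h {v, u} = b} \<union> {u \<in> nbrs F v. g {v, u} = b}"
    using split by (auto simp: nbrs_def insert_commute)
  then have "card {u \<in> nbrs (E \<union> F) v. ?h {v, u} = b}
      = card {u \<in> nbrs E v. h {v, u} = b} + card {u \<in> nbrs F v. g {v, u} = b}"
    using fin split(2) by (simp add: card_Un_disjoint disjoint_iff)
  moreover have "degree (E \<union> F) v = degree E v + degree F v"
    using fin split by (simp add: degree_def card_Un_disjoint)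
  ultimately show "2 * card {u \<in> nbrs (E \<union> F) v. ?h {v, u} = b} \<le> degree (E \<union> F) v + 1"
    using assms(4,5) by (simp add: balanced_def perfectly_balanced_def add_mult_distrib2)
qed

lemma balanced_insert_pendant_edge:
  assumes a: "nbrs E a = {}" "a \<noteq> b" and fin: "finite (nbrs E b)" and h: "balanced E h"
  obtains \<beta> where "balanced (insert {a, b} E) (h({a, b} := \<beta>))"
proof -
  define cnt where "cnt \<beta> = card {u \<in> nbrs E b. h {b, u} = \<beta>}" for \<beta>
  define \<beta> where "\<beta> = (cnt True \<le> cnt False)"
  have "cnt True + cnt False = degree E b"
    using card_filter_add_card_filter_not[OF fin, of "\<lambda>u. h {b, u}"] by (simp add: cnt_def degree_def)
  then have minority: "2 * cnt \<beta> \<le> degree E b"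
    by (cases "cnt True \<le> cnt False") (simp_all add: \<beta>_def)
  have "a \<notin> nbrs E b" using a(1) nbrs_sym[of a E b] by simp
  let ?E = "insert {a, b} E" and ?h = "h({a, b} := \<beta>)"
  have "2 * card {u \<in> nbrs ?E v. ?h {v, u} = \<gamma>} \<le> degree ?E v + 1" for v \<gamma>
  proof -
    consider "v = a" | "v = b" | "v \<noteq> a" "v \<noteq> b" by blast
    then show ?thesis
    proof cases
      case 1
      then have "nbrs ?E v = {b}"
        using a by (auto simp: nbrs_def doubleton_eq_iff)
      moreover have "card {u \<in> {b}. ?h {v, u} = \<gamma>} \<le> card {b}"
        by (intro card_mono) auto
      ultimately show ?thesis by (simp add: degree_def)
    next
      case 2
      have same_edge: "{u, b} = {a, b} \<longleftrightarrow> u = a" "{b, u} = {a, b} \<longleftrightarrow> u = a" for u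
        using a(2) by (auto simp: doubleton_eq_iff)
      then have nb: "nbrs ?E b = insert a (nbrs E b)"
        by (auto simp: nbrs_def)
      have "{u \<in> nbrs ?E b. ?h {b, u} = \<gamma>}
          = (if \<gamma> = \<beta> then insert a {u \<in> nbrs E b. h {b, u} = \<gamma>} else {u \<in> nbrs E b. h {b, u} = \<gamma>})"
        unfolding nb using same_edge(2) \<open>a \<notin> nbrs E b\<close> by auto
      then have "card {u \<in> nbrs ?E b. ?h {b, u} = \<gamma>} = (if \<gamma> = \<beta> then cnt \<gamma> + 1 else cnt \<gamma>)"
        using fin \<open>a \<notin> nbrs E b\<close> by (simp add: cnt_def)
      moreover have "2 * cnt \<gamma> \<le> degree E b + 1"
        using h by (simp add: balanced_def cnt_def)
      ultimately show ?thesis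
        using 2 nb minority fin \<open>a \<notin> nbrs E b\<close> by (auto simp: degree_def)
    next
      case 3
      then have "nbrs ?E v = nbrs E v" "\<And>u. ?h {v, u} = h {v, u}"
        by (auto simp: nbrs_def doubleton_eq_iff)
      then show ?thesis using h by (simp add: balanced_def degree_def)
    qed
  qed
  then show ?thesis using that[of \<beta>] unfolding balanced_def by blast
qed

locale bipartite_graph =
  fixes V :: "'a set" and E :: "'a set set" and A :: "'a set"
  assumes simple: "simple_graph V E" and crossing: "\<forall>e\<in>E. card (e \<inter> A) = 1"
begin

lemma finite_V: "finite V"
  using simple by (simp add: simple_graph_def)

lemma edge_subset: "e \<in> E \<Longrightarrow> e \<subseteq> V"
  using simple by (simp add: simple_graph_def)

lemma card_edge: "e \<in> E \<Longrightarrow> card e = 2"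
  using simple by (simp add: simple_graph_def)

lemma finite_E: "finite E"
  using finite_V edge_subset by (intro finite_subset[of E "Pow V"]) auto

lemma edge_ends_distinct: "{x, y} \<in> E \<Longrightarrow> x \<noteq> y"
  using card_edge by fastforce

lemma edge_crosses: "{x, y} \<in> E \<Longrightarrow> x \<in> A \<longleftrightarrow> y \<notin> A"
  using crossing edge_ends_distinct by (fastforce simp: Int_insert_left split: if_splits)

lemma nbrs_subset: "nbrs E v \<subseteq> V"
  using edge_subset by (auto simp: nbrs_def)

end

lemma bipartite_graph_subset:
  "bipartite_graph V E A \<Longrightarrow> F \<subseteq> E \<Longrightarrow> bipartite_graph V F A"
  by (auto simp: bipartite_graph_def simple_graph_def)

context bipartite_graph
begin

lemma path_alternates:
  assumes "successively (\<lambda>x y. {x, y} \<in> E) xs" "i < length xs"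
  shows "xs ! i \<in> A \<longleftrightarrow> (xs ! 0 \<in> A \<longleftrightarrow> even i)"
  using assms(2)
proof (induction i)
  case (Suc i)
  then have "{xs ! i, xs ! Suc i} \<in> E"
    using successively_nth[OF assms(1) Suc.prems] by simp
  then show ?case using Suc edge_crosses by auto
qed simp

lemma exists_unextendable_path:
  assumes "{a, b} \<in> E"
  obtains xs where "distinct xs" "successively (\<lambda>x y. {x, y} \<in> E) xs" "2 \<le> length xs"
    "\<And>w. {w, hd xs} \<in> E \<Longrightarrow> w \<in> set xs"
proof -
  define path where "path xs \<longleftrightarrow> distinct xs \<and> set xs \<subseteq> V \<and> 2 \<le> length xs
      \<and> successively (\<lambda>x y. {x, y} \<in> E) xs" for xs
  have "path [a, b]"
    using assms edge_ends_distinct edge_subset by (auto simp: path_def)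
  moreover have "length xs < Suc (card V)" if "path xs" for xs
    using that finite_V distinct_card[of xs] card_mono[of V "set xs"]
    by (simp add: path_def less_Suc_eq_le)
  ultimately obtain xs where xs: "path xs" and longest: "\<And>ys. path ys \<Longrightarrow> length ys \<le> length xs"
    using ex_has_greatest_nat[of path "[a, b]" length] by metis
  have "w \<in> set xs" if "{w, hd xs} \<in> E" for w
  proof (rule ccontr)
    assume "w \<notin> set xs"
    moreover have "w \<in> V" using that edge_subset by blast
    ultimately have "path (w # xs)"
      using xs that by (cases xs) (auto simp: path_def)
    then show False using longest by fastforce
  qed
  then show ?thesis using that xs by (auto simp: path_def)
qed

lemma closed_path_even_cycle:
  assumes "distinct xs" "successively (\<lambda>x y. {x, y} \<in> E) xs"
    and "j < length xs" "2 \<le> j" "{xs ! j, xs ! 0} \<in> E"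
  shows "inj_on ((!) xs) {..<Suc j}" "even (Suc j)" "4 \<le> Suc j"
    "cycle_edges ((!) xs) (Suc j) \<subseteq> E"
proof -
  show "inj_on ((!) xs) {..<Suc j}"
    using assms(1,3) by (auto simp: inj_on_def nth_eq_iff_index_eq)
  have "odd j"
    using path_alternates[OF assms(2,3)] path_alternates[OF assms(2), of 0] assms(3)
      edge_crosses[OF assms(5)] by auto
  then show "even (Suc j)" "4 \<le> Suc j" using assms(4) by presburger+
  show "cycle_edges ((!) xs) (Suc j) \<subseteq> E"
  proof
    fix e assume "e \<in> cycle_edges ((!) xs) (Suc j)"
    then obtain i where i: "i < Suc j" "e = {xs ! i, xs ! (Suc i mod Suc j)}"
      by (auto simp: cycle_edges_def)
    show "e \<in> E"
    proof (cases "i = j")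
      case True then show ?thesis using i assms(5) by simp
    next
      case False then show ?thesis
        using i assms(3) successively_nth[OF assms(2), of i] by simp
    qed
  qed
qed

lemma pendant_edge_or_even_cycle:
  assumes "E \<noteq> {}"
  shows "(\<exists>a b. {a, b} \<in> E \<and> nbrs E a = {b})
    \<or> (\<exists>c m. inj_on c {..<m} \<and> even m \<and> 4 \<le> m \<and> cycle_edges c m \<subseteq> E)"
proof -
  obtain e where "e \<in> E" using assms by blast
  then obtain a b where "{a, b} \<in> E" using card_edge by (metis card_2_iff)
  then obtain xs where xs: "distinct xs" "successively (\<lambda>x y. {x, y} \<in> E) xs" "2 \<le> length xs"
    and closed: "\<And>w. {w, hd xs} \<in> E \<Longrightarrow> w \<in> set xs"
    using exists_unextendable_path by blast
  have "{xs ! 0, xs ! 1} \<in> E" using successively_nth[OF xs(2), of 0] xs(3) by simp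
  then have x1: "xs ! 1 \<in> nbrs E (xs ! 0)" by (simp add: nbrs_def insert_commute)
  show ?thesis
  proof (cases "nbrs E (xs ! 0) = {xs ! 1}")
    case True
    then show ?thesis using \<open>{xs ! 0, xs ! 1} \<in> E\<close> by blast
  next
    case False
    then obtain w where w: "{w, xs ! 0} \<in> E" "w \<noteq> xs ! 1"
      using x1 by (auto simp: nbrs_def)
    have "hd xs = xs ! 0" using xs(3) by (cases xs) auto
    then obtain j where j: "j < length xs" "xs ! j = w"
      using closed w(1) by (metis in_set_conv_nth)
    have "j \<noteq> 0" using j(2) w(1) edge_ends_distinct[of w "xs ! 0"] by (metis)
    moreover have "j \<noteq> 1" using j w(2) by blast
    ultimately have "2 \<le> j" by simp
    then show ?thesis using closed_path_even_cycle[OF xs(1,2) j(1)] j(2) w(1) by blast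
  qed
qed

end

lemma balanced_colouring_exists:
  assumes "bipartite_graph V E A"
  shows "\<exists>h. balanced E h"
  using assms
proof (induction "card E" arbitrary: E rule: less_induct)
  case less
  interpret bipartite_graph V E A by (rule less.prems)
  have IH: "\<exists>h. balanced E' h" if "E' \<subset> E" for E'
    using that by (intro less.hyps psubset_card_mono finite_E bipartite_graph_subset[OF less.prems]) auto
  have fin: "finite (nbrs F v)" if "F \<subseteq> E" for F v
  proof (rule finite_subset[OF _ finite_V])
    show "nbrs F v \<subseteq> V" using that nbrs_subset by (auto simp: nbrs_def)
  qed
  show ?case
  proof (cases "E = {}")
    case True
    then show ?thesis by (intro exI[of _ "\<lambda>_. True"]) (simp add: balanced_def nbrs_def)
  next
    case False
    from pendant_edge_or_even_cycle[OF this] show ?thesis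
    proof (elim disjE exE conjE)
      fix a b assume ab: "{a, b} \<in> E" "nbrs E a = {b}"
      let ?E' = "E - {{a, b}}"
      obtain h where "balanced ?E' h" using IH ab(1) by blast
      moreover have "nbrs ?E' a = {}" using ab(2) by (auto simp: nbrs_def insert_commute)
      ultimately obtain \<beta> where "balanced (insert {a, b} ?E') (h({a, b} := \<beta>))"
        using balanced_insert_pendant_edge[OF _ edge_ends_distinct[OF ab(1)] fin[of ?E']] by blast
      moreover have "insert {a, b} ?E' = E" using ab(1) by blast
      ultimately show ?thesis by auto
    next
      fix c m assume cyc: "inj_on c {..<m}" "even m" "4 \<le> m" "cycle_edges c m \<subseteq> E"
      let ?F = "cycle_edges c m"
      have "?F \<noteq> {}" using cyc(3) by (simp add: cycle_edges_def lessThan_empty_iff)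
      then obtain h where "balanced (E - ?F) h" using IH cyc(4) by blast
      then have "balanced ((E - ?F) \<union> ?F) (\<lambda>e. if e \<in> ?F then alternating c m e else h e)"
        using fin cyc(4) alternating_cycle_perfectly_balanced[OF cyc(1-3)]
        by (intro balanced_Un_perfectly_balanced) auto
      moreover have "(E - ?F) \<union> ?F = E" using cyc(4) by blast
      ultimately show ?thesis by auto
    qed
  qed
qed

definition reachable :: "'a set set \<Rightarrow> 'a \<Rightarrow> 'a \<Rightarrow> bool" where
  "reachable E = (\<lambda>x y. {x, y} \<in> E)\<^sup>*\<^sup>*"

lemma equivp_reachable: "equivp (reachable E)"
  unfolding reachable_def by (rule equivp_rtranclp) (simp add: symp_def insert_commute)

lemma reachable_edge: "{x, y} \<in> E \<Longrightarrow> reachable E x y"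
  by (simp add: reachable_def r_into_rtranclp)

lemma reachable_refl: "reachable E x x"
  by (simp add: reachable_def)

lemma reachable_cong: "reachable E x y \<Longrightarrow> reachable E x z \<longleftrightarrow> reachable E y z"
  using equivp_reachable by (meson equivp_symp equivp_transp)

lemma reachable_isolated: "reachable E x y \<Longrightarrow> x = y \<or> nbrs E y \<noteq> {}"
  unfolding reachable_def by (induction rule: rtranclp_induct) (auto simp: nbrs_def)

definition zero_sum_weights :: "'a set \<Rightarrow> 'a \<Rightarrow> int" where
  "zero_sum_weights S = (SOME g. (\<forall>x\<in>S. g x \<in> {1, 2}) \<and> [(\<Sum>x\<in>S. g x) = 0] (mod 3))"

lemma zero_sum_weights:
  assumes "finite S" "2 \<le> card S"
  shows "\<forall>x\<in>S. zero_sum_weights S x \<in> {1, 2}" "[(\<Sum>x\<in>S. zero_sum_weights S x) = 0] (mod 3)"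
proof -
  obtain p q where pq: "p \<in> S" "q \<in> S" "p \<noteq> q"
    using assms card_le_Suc0_iff_eq[OF assms(1)] by fastforce
  define n where "n = int (card S) - 2"
  define a b :: int
    where "a = (if n mod 3 = 2 then 2 else 1)" and "b = (if n mod 3 = 1 then 1 else 2)"
  have "[n + a + b = 0] (mod 3)"
    unfolding cong_def a_def b_def by presburger
  define g where "g x = (if x = p then a else if x = q then b else 1)" for x
  have "(\<Sum>x\<in>S. g x) = g p + (g q + (\<Sum>x\<in>S - {p} - {q}. g x))"
    using assms(1) pq by (simp add: sum.remove[of S p] sum.remove[of "S - {p}" q])
  also have "(\<Sum>x\<in>S - {p} - {q}. g x) = (\<Sum>x\<in>S - {p} - {q}. 1)"
    by (rule sum.cong) (auto simp: g_def)
  also have "\<dots> = n"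
    using assms pq by (simp add: n_def card_Diff_singleton of_nat_diff)
  finally have "\<exists>g :: 'a \<Rightarrow> int. (\<forall>x\<in>S. g x \<in> {1, 2}) \<and> [(\<Sum>x\<in>S. g x) = 0] (mod 3)"
    using \<open>[n + a + b = 0] (mod 3)\<close> pq(3)
    by (intro exI[of _ g]) (auto simp: g_def a_def b_def algebra_simps)
  from someI_ex[OF this] show "\<forall>x\<in>S. zero_sum_weights S x \<in> {1, 2}"
    "[(\<Sum>x\<in>S. zero_sum_weights S x) = 0] (mod 3)"
    unfolding zero_sum_weights_def by blast+
qed

context bipartite_graph
begin

lemma non_isolated_in_V: "nbrs E y \<noteq> {} \<Longrightarrow> y \<in> V"
  using edge_subset by (auto simp: nbrs_def)

lemma finite_reachable: "finite {y. reachable E x y \<and> P y}"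
proof (rule finite_subset)
  show "{y. reachable E x y \<and> P y} \<subseteq> insert x V"
    using reachable_isolated[of E x] non_isolated_in_V by blast
  show "finite (insert x V)" using finite_V by simp
qed

lemma cancelling_reachable:
  assumes "cancels_on_edges p E f" "reachable E x y"
  shows "[f y = (if x \<in> A \<longleftrightarrow> y \<in> A then f x else - f x)] (mod p)"
  using assms(2) unfolding reachable_def
proof (induction rule: rtranclp_induct)
  case (step y z)
  have "[f z = - f y] (mod p)"
    using assms(1) step(2) by (simp add: cancels_on_edges_def cong_iff_dvd_diff add.commute)
  also have "[- f y = - (if x \<in> A \<longleftrightarrow> y \<in> A then f x else - f x)] (mod p)"
    using step(3) by (simp only: cong_minus_minus_iff)
  finally show ?case using edge_crosses[OF step(2)] by auto
qed simp

(* In each component the marked vertices are the non-isolated vertices of one colour class: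
   the class outside A if it has at least two vertices, the class in A otherwise. *)
definition marked :: "'a \<Rightarrow> bool" where
  "marked w \<longleftrightarrow> nbrs E w \<noteq> {} \<and> (w \<in> A \<longleftrightarrow> card {y. reachable E w y \<and> y \<notin> A} < 2)"

definition marked_class :: "'a \<Rightarrow> 'a set" where
  "marked_class w = {y. reachable E w y \<and> marked y}"

definition target :: "'a \<Rightarrow> int" where
  "target w = (if marked w then zero_sum_weights (marked_class w) w else 0)"

lemma marked_edge:
  assumes "{u, v} \<in> E" shows "marked u \<longleftrightarrow> \<not> marked v"
proof -
  have "nbrs E u \<noteq> {}" "nbrs E v \<noteq> {}"
    using assms by (auto simp: nbrs_def insert_commute)
  moreover have "{y. reachable E u y \<and> y \<notin> A} = {y. reachable E v y \<and> y \<notin> A}"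
    using reachable_cong[OF reachable_edge[OF assms]] by auto
  ultimately show ?thesis using edge_crosses[OF assms] by (auto simp: marked_def)
qed

lemma marked_reachable_iff:
  assumes "marked w" "reachable E w y"
  shows "marked y \<longleftrightarrow> (y \<in> A \<longleftrightarrow> w \<in> A)"
proof -
  have "nbrs E y \<noteq> {}"
    using reachable_isolated[OF assms(2)] assms(1) by (auto simp: marked_def)
  moreover have "{x. reachable E y x \<and> x \<notin> A} = {x. reachable E w x \<and> x \<notin> A}"
    using reachable_cong[OF assms(2)] by auto
  ultimately show ?thesis using assms(1) by (auto simp: marked_def)
qed

lemma marked_class_eq: "reachable E w y \<Longrightarrow> marked_class y = marked_class w"
  using reachable_cong[of E w y] by (auto simp: marked_class_def)

lemma in_marked_class: "marked w \<Longrightarrow> w \<in> marked_class w"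
  by (simp add: marked_class_def reachable_refl)

lemma finite_marked_class: "finite (marked_class w)"
  unfolding marked_class_def by (rule finite_reachable)

end

locale nice_bipartite_graph = bipartite_graph +
  assumes nice: "nice E"
begin

lemma large_side:
  assumes "nbrs E w \<noteq> {}"
  shows "2 \<le> card {y. reachable E w y \<and> y \<in> A} \<or> 2 \<le> card {y. reachable E w y \<and> y \<notin> A}"
proof (rule ccontr)
  assume small: "\<not> ?thesis"
  define side where "side x = {y. reachable E w y \<and> (y \<in> A \<longleftrightarrow> x \<in> A)}" for x
  obtain z where z: "{z, w} \<in> E" using assms by (auto simp: nbrs_def)
  have reach: "reachable E w x" if "x = w \<or> x = z" for x
    using that reachable_refl reachable_edge[of w z] z by (auto simp: insert_commute)
  have singleton: "side x = {x}" if "x = w \<or> x = z" for x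
  proof -
    have fin: "finite (side x)" unfolding side_def by (rule finite_reachable)
    have "card (side x) \<le> Suc 0"
      using small by (cases "x \<in> A") (simp_all add: side_def)
    moreover have "x \<in> side x" using reach[OF that] by (simp add: side_def)
    ultimately show ?thesis by (auto simp: card_le_Suc0_iff_eq[OF fin])
  qed
  have nbrs_side: "nbrs E x \<subseteq> side y" if "x = w \<or> x = z" "y \<in> nbrs E x" for x y
  proof
    fix u assume "u \<in> nbrs E x"
    then have "{u, x} \<in> E" by (simp add: nbrs_def)
    then have "reachable E x u" "u \<in> A \<longleftrightarrow> x \<notin> A"
      using reachable_edge[of x u] edge_crosses[of u x] by (simp_all add: insert_commute)
    moreover have "x \<in> A \<longleftrightarrow> y \<notin> A"
      using that(2) edge_crosses[of y x] by (simp add: nbrs_def)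
    ultimately show "u \<in> side y"
      using reachable_cong[OF reach[OF that(1)]] by (auto simp: side_def)
  qed
  have "w \<in> nbrs E z" "z \<in> nbrs E w" using z by (auto simp: nbrs_def insert_commute)
  then have "nbrs E w = {z}" "nbrs E z = {w}"
    using nbrs_side[of w z] nbrs_side[of z w] singleton[of w] singleton[of z] by auto
  then have "degree E w = 1" "degree E z = 1" by (simp_all add: degree_def)
  then show False using nice z unfolding nice_def by blast
qed

lemma card_marked_class:
  assumes "marked w" shows "2 \<le> card (marked_class w)"
proof -
  have "marked_class w = {y. reachable E w y \<and> (y \<in> A \<longleftrightarrow> w \<in> A)}"
    using marked_reachable_iff[OF assms] by (auto simp: marked_class_def)
  then show ?thesis
    using assms large_side[of w] by (cases "w \<in> A") (auto simp: marked_def)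
qed

lemma target_marked:
  assumes "marked w" shows "target w \<in> {1, 2}"
  using zero_sum_weights(1)[OF finite_marked_class card_marked_class[OF assms]]
    in_marked_class[OF assms] assms by (simp add: target_def)

lemma target_separates:
  assumes "{u, v} \<in> E" shows "\<not> [target u = target v] (mod 3)"
proof -
  have "\<not> [0 = x] (mod 3)" "\<not> [x = 0] (mod 3)" if "x \<in> {1, 2}" for x :: int
    using that by (auto simp: cong_def)
  then show ?thesis
    using marked_edge[OF assms] target_marked[of u] target_marked[of v]
    by (cases "marked u") (auto simp: target_def)
qed

lemma sum_target_marked_class:
  assumes "marked w" shows "[(\<Sum>x\<in>marked_class w. target x) = 0] (mod 3)"
proof -
  have "target x = zero_sum_weights (marked_class w) x" if "x \<in> marked_class w" for x
    using that marked_class_eq[of w x] by (auto simp: target_def marked_class_def)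
  then show ?thesis
    using zero_sum_weights(2)[OF finite_marked_class card_marked_class[OF assms]] by simp
qed

lemma target_orthogonal:
  assumes f: "cancels_on_edges 3 E f"
  shows "[(\<Sum>w\<in>V. f w * target w) = 0] (mod 3)"
proof -
  let ?M = "{w \<in> V. marked w}"
  have "(\<Sum>w\<in>V. f w * target w) = (\<Sum>w\<in>?M. f w * target w)"
    by (rule sum.mono_neutral_right) (auto simp: target_def finite_V)
  also have "\<dots> = (\<Sum>S\<in>marked_class ` ?M. \<Sum>w\<in>{x \<in> ?M. marked_class x = S}. f w * target w)"
    by (rule sum.image_gen) (simp add: finite_V)
  also have "[\<dots> = (\<Sum>S\<in>marked_class ` ?M. 0)] (mod 3)"
  proof (rule cong_sum)
    fix S assume "S \<in> marked_class ` ?M"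
    then obtain w where w: "w \<in> V" "marked w" "S = marked_class w" by blast
    have same_class: "{x \<in> ?M. marked_class x = S} = marked_class w"
    proof (intro equalityI subsetI)
      fix x assume "x \<in> {x \<in> ?M. marked_class x = S}"
      then show "x \<in> marked_class w" using in_marked_class[of x] w(3) by auto
    next
      fix x assume "x \<in> marked_class w"
      then have "marked x" "reachable E w x" by (auto simp: marked_class_def)
      then show "x \<in> {x \<in> ?M. marked_class x = S}"
        using marked_class_eq[of w x] non_isolated_in_V[of x] w(3) by (auto simp: marked_def)
    qed
    have "[f x * target x = f w * target x] (mod 3)" if "x \<in> marked_class w" for x
    proof -
      have "reachable E w x" "x \<in> A \<longleftrightarrow> w \<in> A"
        using that marked_reachable_iff[OF w(2)] by (auto simp: marked_class_def)
      then have "[f x = f w] (mod 3)" using cancelling_reachable[OF f, of w x] by simp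
      then show ?thesis by (intro cong_mult cong_refl)
    qed
    then have "[(\<Sum>x\<in>marked_class w. f x * target x) = (\<Sum>x\<in>marked_class w. f w * target x)] (mod 3)"
      by (rule cong_sum)
    also have "(\<Sum>x\<in>marked_class w. f w * target x) = f w * (\<Sum>x\<in>marked_class w. target x)"
      by (simp add: sum_distrib_left)
    also have "[\<dots> = f w * 0] (mod 3)"
      by (intro cong_scalar_left sum_target_marked_class w(2))
    finally show "[(\<Sum>w\<in>{x \<in> ?M. marked_class x = S}. f w * target w) = 0] (mod 3)"
      unfolding same_class by simp
  qed
  finally show ?thesis by simp
qed

end

lemma qm_nsd_colorable_from_weighting:
  fixes \<rho> :: "'a set \<Rightarrow> int" and t :: "'a \<Rightarrow> int"
  assumes G: "simple_graph V E" and h: "balanced E h"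
    and sums: "\<forall>w\<in>V. [(\<Sum>u\<in>nbrs E w. \<rho> {w, u}) = t w] (mod 3)"
    and sep: "\<And>u v. {u, v} \<in> E \<Longrightarrow> \<not> [t u = t v] (mod 3)"
  shows "qm_nsd_colorable 6 V E"
proof -
  \<comment> \<open>\<open>h\<close> picks the half \<open>{1, 2, 3}\<close> or \<open>{4, 5, 6}\<close>, \<open>\<rho>\<close> the residue mod 3\<close>
  define c where "c e = nat ((\<rho> e - 1) mod 3) + 1 + (if h e then 3 else 0)" for e
  have residue: "[int (c e) = \<rho> e] (mod 3)" for e
  proof -
    have "int (c e) = (\<rho> e - 1) mod 3 + 1 + (if h e then 3 else 0)"
      by (simp add: c_def)
    then show ?thesis by (simp add: cong_def mod_simps)
  qed
  have small: "nat ((\<rho> e - 1) mod 3) \<le> 2" for e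
    by (simp add: nat_le_iff)
  have half: "3 < c e \<longleftrightarrow> h e" for e
    using small[of e] by (simp add: c_def)
  have "edge_coloring 6 E c"
    using small by (auto simp: edge_coloring_def c_def intro: le_trans)
  moreover have "quasi_majority V E c"
    unfolding quasi_majority_def
  proof (intro ballI allI)
    fix v i
    have "card {u \<in> nbrs E v. c {v, u} = i} \<le> card {u \<in> nbrs E v. h {v, u} = (3 < i)}"
      using half finite_nbrs[OF G] by (intro card_mono) auto
    then show "2 * card {u \<in> nbrs E v. c {v, u} = i} \<le> degree E v + 1"
      using h unfolding balanced_def by (meson dual_order.trans mult_le_mono2)
  qed
  moreover have "nsd E c"
    unfolding nsd_def
  proof (intro allI impI notI)
    fix u v assume e: "{u, v} \<in> E" and eq: "sigma E c u = sigma E c v"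
    have "[int (sigma E c w) = t w] (mod 3)" if "w \<in> V" for w
    proof -
      have "[int (sigma E c w) = (\<Sum>u\<in>nbrs E w. \<rho> {w, u})] (mod 3)"
        unfolding sigma_def of_nat_sum by (intro cong_sum residue)
      then show ?thesis using sums that cong_trans by blast
    qed
    moreover have "u \<in> V" "v \<in> V"
      using e G by (auto simp: simple_graph_def)
    ultimately have "[t u = t v] (mod 3)"
      using eq by (metis cong_sym cong_trans)
    then show False using sep[OF e] by blast
  qed
  ultimately show ?thesis by (auto simp: qm_nsd_colorable_def)
qed

theorem mainTheorem2:
  fixes V :: "'a set" and E :: "'a set set"
  assumes "simple_graph V E" and "bipartite V E" and "nice E"
  shows "qm_nsd_colorable 6 V E"
proof -
  obtain A where "\<forall>e\<in>E. card (e \<inter> A) = 1"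
    using assms(2) by (auto simp: bipartite_def)
  then interpret nice_bipartite_graph V E A
    using assms(1,3) by unfold_locales
  obtain h where "balanced E h"
    using balanced_colouring_exists bipartite_graph_axioms by blast
  moreover obtain \<rho> where "\<forall>w\<in>V. [(\<Sum>u\<in>nbrs E w. \<rho> {w, u}) = target w] (mod 3)"
    using nbr_sums_solvable_mod_prime[of 3 E V target] finite_E card_edge finite_V edge_subset
      target_orthogonal by fastforce
  ultimately show ?thesis
    using qm_nsd_colorable_from_weighting[OF simple] target_separates by blast
qed

end
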